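(* Let $\mathcal{U}$ be a selective nonprincipal ultrafilter on $\mathbb{N}$ and let $X$ be a reflexive Banach space. Let $(y_n)_{n\ge1}$ be a bounded sequence in $X$ and $(x_n^{*})_{n\ge1}$ a bounded sequence in $X^{*}$ with $w\text{-}\lim_{n,\mathcal{U}}y_n=0$ and $w\text{-}\lim_{n,\mathcal{U}}x_n^{*}=0$. Then there exists $B=\{t(0),t(1),\ldots\}\in\mathcal{U}$ with $t(0)<t(1)<\cdots$ such that $|x^{*}_{t(j)}(y_{t(k)})|\le 2^{-\max(j,k)}$ for all $j\ne k$.
   Context: $w\text{-}\lim_{n,\mathcal{U}}$ denotes the weak limit along the ultrafilter $\mathcal{U}$. An ultrafilter $\mathcal{U}$ on $\mathbb{N}$ is selective if (1) for every sequence $A_1,A_2,\dots$ in $\mathcal{U}$ there is $A\in\mathcal{U}$ with $A\setminus A_k$ finite for each $k$; and (2) for every partition of $\mathbb{N}$ into finite sets $A_1,A_2,\dots$ there is $A\in\mathcal{U}$ with $A\cap A_k$ a singleton for each $k$. *)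

theory Defs
  imports "HOL-Analysis.Analysis"
begin

definition ultrafilter_nat :: "nat set set \<Rightarrow> bool" where
  "ultrafilter_nat U \<longleftrightarrow>
     UNIV \<in> U \<and> {} \<notin> U \<and>
     (\<forall>A B. A \<in> U \<longrightarrow> A \<subseteq> B \<longrightarrow> B \<in> U) \<and>
     (\<forall>A B. A \<in> U \<longrightarrow> B \<in> U \<longrightarrow> A \<inter> B \<in> U) \<and>
     (\<forall>A. A \<in> U \<or> - A \<in> U)"

definition nonprincipal :: "nat set set \<Rightarrow> bool" where
  "nonprincipal U \<longleftrightarrow> (\<forall>n. {n} \<notin> U)"

definition selective :: "nat set set \<Rightarrow> bool" where
  "selective U \<longleftrightarrow>
     (\<forall>A :: nat \<Rightarrow> nat set. (\<forall>k. A k \<in> U) \<longrightarrow>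
        (\<exists>B\<in>U. \<forall>k. finite (B - A k))) \<and>
     (\<forall>A :: nat \<Rightarrow> nat set.
        (\<forall>k. finite (A k) \<and> A k \<noteq> {}) \<and>
        (\<forall>j k. j \<noteq> k \<longrightarrow> A j \<inter> A k = {}) \<and>
        (\<Union>k. A k) = UNIV \<longrightarrow>
        (\<exists>B\<in>U. \<forall>k. \<exists>m. B \<inter> A k = {m}))"

definition ulim :: "nat set set \<Rightarrow> (nat \<Rightarrow> real) \<Rightarrow> real \<Rightarrow> bool" where
  "ulim U a L \<longleftrightarrow> (\<forall>e>0. {n. \<bar>a n - L\<bar> < e} \<in> U)"

definition weak_ulim :: "nat set set \<Rightarrow> (nat \<Rightarrow> 'a::real_normed_vector) \<Rightarrow> 'a \<Rightarrow> bool" where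
  "weak_ulim U y L \<longleftrightarrow>
     (\<forall>f :: 'a \<Rightarrow>\<^sub>L real. ulim U (\<lambda>n. blinfun_apply f (y n)) (blinfun_apply f L))"

definition reflexive_space :: "'a::banach itself \<Rightarrow> bool" where
  "reflexive_space _ \<longleftrightarrow>
     (\<forall>\<phi> :: ('a \<Rightarrow>\<^sub>L real) \<Rightarrow>\<^sub>L real. \<exists>x::'a. \<forall>f. blinfun_apply \<phi> f = blinfun_apply f x)"

end

theory Submission
  imports Defs
begin

text \<open>
  By weak nullity along \<open>U\<close>, for each \<open>m\<close> the set \<open>C m\<close> of indices \<open>n\<close> with
  \<open>\<bar>x\<^sub>i(y\<^sub>n)\<bar>, \<bar>x\<^sub>n(y\<^sub>i)\<bar> < 2\<^sup>-\<^sup>(\<^sup>m\<^sup>+\<^sup>1\<^sup>)\<close> for all \<open>i \<le> m\<close> (\<open>cross_small\<close>) belongs to \<open>U\<close>.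
  Selectivity first yields one \<open>B \<in> U\<close> almost contained in every \<open>C m\<close>, say
  \<open>n \<in> C m\<close> whenever \<open>n \<in> B\<close> and \<open>n \<ge> h m\<close>, and then a \<open>P \<in> U\<close> so sparse that
  any two of its elements \<open>b < c\<close> satisfy \<open>c \<ge> h b\<close>. Enumerating \<open>B \<inter> P\<close> increasingly as
  \<open>t\<close> gives \<open>t (k+1) \<in> C (t k)\<close>, which is the required estimate since \<open>k \<le> t k\<close>.
\<close>

lemma ultrafilter_nat_Int:
  "ultrafilter_nat U \<Longrightarrow> A \<in> U \<Longrightarrow> B \<in> U \<Longrightarrow> A \<inter> B \<in> U"
  unfolding ultrafilter_nat_def by blast

lemma ultrafilter_nat_mono:
  "ultrafilter_nat U \<Longrightarrow> A \<in> U \<Longrightarrow> A \<subseteq> B \<Longrightarrow> B \<in> U"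
  unfolding ultrafilter_nat_def by blast

lemma ultrafilter_nat_all_atMost:
  fixes m :: nat
  assumes U: "ultrafilter_nat U" and P: "\<And>i. {n. P i n} \<in> U"
  shows "{n. \<forall>i\<le>m. P i n} \<in> U"
proof (induction m)
  case 0
  then show ?case using P by simp
next
  case (Suc m)
  have "{n. \<forall>i\<le>Suc m. P i n} = {n. \<forall>i\<le>m. P i n} \<inter> {n. P (Suc m) n}"
    by (auto simp: le_Suc_eq)
  then show ?case using ultrafilter_nat_Int[OF U Suc P] by simp
qed

lemma ultrafilter_nat_nonprincipal_infinite:
  assumes U: "ultrafilter_nat U" and np: "nonprincipal U" and A: "A \<in> U"
  shows "infinite A"
proof
  assume "finite A"
  then show False using A
  proof (induction A rule: finite_induct)
    case empty
    then show ?case using U unfolding ultrafilter_nat_def by blast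
  next
    case (insert a F)
    have "- {a} \<in> U" using U np unfolding ultrafilter_nat_def nonprincipal_def by blast
    then have "insert a F \<inter> - {a} \<in> U" using ultrafilter_nat_Int[OF U] insert.prems by blast
    then have "F \<in> U" by (rule ultrafilter_nat_mono[OF U]) auto
    then show ?case using insert.IH by blast
  qed
qed

lemma weak_ulim_zero_apply:
  fixes e :: real
  assumes "weak_ulim U y 0" "e > 0"
  shows "{n. \<bar>blinfun_apply f (y n)\<bar> < e} \<in> U"
  using assms unfolding weak_ulim_def ulim_def by (simp add: blinfun.zero_right)

lemma weak_ulim_zero_dual_apply:
  fixes x :: "nat \<Rightarrow> ('a::real_normed_vector \<Rightarrow>\<^sub>L real)" and e :: real
  assumes "weak_ulim U x 0" "e > 0"
  shows "{n. \<bar>blinfun_apply (x n) v\<bar> < e} \<in> U"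
proof -
  have "bounded_linear (\<lambda>f::'a \<Rightarrow>\<^sub>L real. blinfun_apply f v)"
    by (rule bounded_bilinear.bounded_linear_left[OF bounded_bilinear_blinfun_apply])
  then show ?thesis
    using weak_ulim_zero_apply[OF assms, of "Blinfun (\<lambda>f. blinfun_apply f v)"]
    by (simp add: bounded_linear_Blinfun_apply)
qed

lemma selective_diagonal:
  fixes C :: "nat \<Rightarrow> nat set"
  assumes sel: "selective U" and C: "\<And>m. C m \<in> U"
  shows "\<exists>B\<in>U. \<exists>h. \<forall>m. \<forall>n\<in>B. h m \<le> n \<longrightarrow> n \<in> C m"
proof -
  obtain B where B: "B \<in> U" "\<And>m. finite (B - C m)"
    using conjunct1[OF sel[unfolded selective_def], rule_format, of C] C by blast
  have "n \<in> C m" if "n \<in> B" "Suc (Max (B - C m)) \<le> n" for m n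
  proof (rule ccontr)
    assume "n \<notin> C m"
    then have "n \<le> Max (B - C m)" using that(1) B(2) by simp
    then show False using that(2) by simp
  qed
  then show ?thesis
    using B(1) by (intro bexI[of _ B] exI[of _ "\<lambda>m. Suc (Max (B - C m))"]) auto
qed

lemma strict_mono_interval_cover:
  assumes "strict_mono (a :: nat \<Rightarrow> nat)" "a 0 = 0"
  shows "\<exists>i. a i \<le> n \<and> n < a (Suc i)"
proof (induction n)
  case 0
  show ?case using assms strict_monoD[OF assms(1), of 0 1] by (intro exI[of _ 0]) auto
next
  case (Suc n)
  then obtain i where i: "a i \<le> n" "n < a (Suc i)" by blast
  show ?case
  proof (cases "Suc n < a (Suc i)")
    case True
    then show ?thesis using i by (intro exI[of _ i]) auto
  next
    case False
    then show ?thesis using i strict_monoD[OF assms(1), of "Suc i" "Suc (Suc i)"]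
      by (intro exI[of _ "Suc i"]) auto
  qed
qed

lemma strict_mono_interval_index_le:
  assumes "strict_mono (a :: nat \<Rightarrow> nat)" "a i \<le> b" "b \<le> c" "c < a (Suc i')"
  shows "i \<le> i'"
proof (rule ccontr)
  assume "\<not> i \<le> i'"
  then have "a (Suc i') \<le> a i" using assms(1) by (simp add: strict_mono_less_eq)
  then show False using assms by linarith
qed

text \<open>
  Cut \<open>\<nat>\<close> into the blocks \<open>[a\<^sub>i, a\<^sub>i\<^sub>+\<^sub>1)\<close> with \<open>a\<^sub>i\<^sub>+\<^sub>1 = g a\<^sub>i\<close>, select one point from
  each block, and keep only the blocks of one parity: two selected points then lie in
  blocks at least two apart, so the larger one is beyond \<open>g\<close> of the smaller one.
\<close>
lemma selective_sparse_mono: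
  fixes g :: "nat \<Rightarrow> nat"
  assumes U: "ultrafilter_nat U" and sel: "selective U"
    and g_mono: "mono g" and g_gt: "\<And>n. n < g n"
  shows "\<exists>P\<in>U. \<forall>b\<in>P. \<forall>c\<in>P. b < c \<longrightarrow> g b \<le> c"
proof -
  define a where "a = rec_nat 0 (\<lambda>_. g)"
  have a_0: "a 0 = 0" and a_Suc: "\<And>i. a (Suc i) = g (a i)" by (simp_all add: a_def)
  have a_sm: "strict_mono a" unfolding strict_mono_Suc_iff using a_Suc g_gt by simp
  define A where "A i = {a i..<a (Suc i)}" for i
  have cover: "\<exists>i. n \<in> A i" for n
    using strict_mono_interval_cover[OF a_sm a_0] unfolding A_def by auto
  have index_le: "i \<le> i'" if "b \<in> A i" "c \<in> A i'" "b \<le> c" for b c i i'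
    using strict_mono_interval_index_le[OF a_sm] that unfolding A_def by auto
  have "finite (A k) \<and> A k \<noteq> {}" for k
    using strict_monoD[OF a_sm, of k "Suc k"] unfolding A_def by simp
  moreover have "A j \<inter> A k = {}" if "j \<noteq> k" for j k
  proof -
    have "n \<notin> A j \<inter> A k" for n
      using index_le[of n j n k] index_le[of n k n j] that by auto
    then show ?thesis by blast
  qed
  moreover have "(\<Union>k. A k) = UNIV" using cover by blast
  ultimately have "(\<forall>k. finite (A k) \<and> A k \<noteq> {}) \<and> (\<forall>j k. j \<noteq> k \<longrightarrow> A j \<inter> A k = {}) \<and>
        (\<Union>k. A k) = UNIV"
    by blast
  then obtain S where S: "S \<in> U" "\<And>k. \<exists>m. S \<inter> A k = {m}"
    using conjunct2[OF sel[unfolded selective_def], rule_format, of A] by blast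
  define Q where "Q p = {n. \<exists>i. even i = p \<and> n \<in> A i}" for p
  have "- Q True \<subseteq> Q False" using cover unfolding Q_def by blast
  moreover have "Q True \<in> U \<or> - Q True \<in> U" using U unfolding ultrafilter_nat_def by blast
  ultimately obtain p where Qp: "Q p \<in> U" using ultrafilter_nat_mono[OF U] by blast
  have "g b \<le> c" if b: "b \<in> S \<inter> Q p" and c: "c \<in> S \<inter> Q p" and "b < c" for b c
  proof -
    obtain i i' where i: "b \<in> A i" "even i = p" and i': "c \<in> A i'" "even i' = p"
      using b c unfolding Q_def by blast
    have "i \<noteq> i'"
    proof
      assume "i = i'"
      obtain m where "S \<inter> A i = {m}" using S(2) by blast
      then have "b = m" "c = m" using b c i(1) i'(1) \<open>i = i'\<close> by blast+
      then show False using \<open>b < c\<close> by simp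
    qed
    then have "i < i'" using index_le[OF i(1) i'(1)] \<open>b < c\<close> by simp
    moreover have "i' \<noteq> Suc i" using i(2) i'(2) by auto
    ultimately have "a (Suc (Suc i)) \<le> a i'" using a_sm by (simp add: strict_mono_less_eq)
    then have "a (Suc (Suc i)) \<le> c" using i'(1) unfolding A_def by simp
    moreover have "g b \<le> g (a (Suc i))" using i(1) g_mono unfolding A_def mono_def by simp
    ultimately show ?thesis using a_Suc by simp
  qed
  then show ?thesis using ultrafilter_nat_Int[OF U S(1) Qp] by blast
qed

lemma selective_sparse:
  fixes g :: "nat \<Rightarrow> nat"
  assumes U: "ultrafilter_nat U" and sel: "selective U"
  shows "\<exists>P\<in>U. \<forall>b\<in>P. \<forall>c\<in>P. b < c \<longrightarrow> g b \<le> c"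
proof -
  define g' where "g' n = n + 1 + (\<Sum>i\<le>n. g i)" for n
  have "mono g'" unfolding mono_def g'_def by (intro allI impI add_mono sum_mono2) auto
  moreover have "n < g' n" for n unfolding g'_def by simp
  ultimately obtain P where P: "P \<in> U" "\<forall>b\<in>P. \<forall>c\<in>P. b < c \<longrightarrow> g' b \<le> c"
    using selective_sparse_mono[OF U sel] by blast
  have "g n \<le> g' n" for n
    using member_le_sum[of n "{..n}" g] unfolding g'_def by simp
  then have "\<forall>b\<in>P. \<forall>c\<in>P. b < c \<longrightarrow> g b \<le> c" using P(2) by (blast intro: le_trans)
  then show ?thesis using P(1) by blast
qed

lemma selective_chain_enumeration:
  assumes U: "ultrafilter_nat U" and np: "nonprincipal U" and sel: "selective U"
    and C: "\<And>m. C m \<in> U"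
  shows "\<exists>t. strict_mono t \<and> range t \<in> U \<and> (\<forall>k. t (Suc k) \<in> C (t k))"
proof -
  obtain B h where B: "B \<in> U" "\<And>m n. n \<in> B \<Longrightarrow> h m \<le> n \<Longrightarrow> n \<in> C m"
    using selective_diagonal[of U C, OF sel C] by blast
  obtain P where P: "P \<in> U" "\<And>b c. b \<in> P \<Longrightarrow> c \<in> P \<Longrightarrow> b < c \<Longrightarrow> h b \<le> c"
    using selective_sparse[OF U sel, of h] by blast
  define D where "D = B \<inter> P"
  have D: "D \<in> U" unfolding D_def using ultrafilter_nat_Int[OF U B(1) P(1)] .
  have D_inf: "infinite D" using ultrafilter_nat_nonprincipal_infinite[OF U np D] .
  define t where "t = enumerate D"
  have t_sm: "strict_mono t" and t_range: "range t = D"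
    using strict_mono_enumerate[OF D_inf] range_enumerate[OF D_inf] by (simp_all add: t_def)
  have "t (Suc k) \<in> C (t k)" for k
  proof -
    have "t k \<in> P" "t (Suc k) \<in> B \<inter> P" using t_range unfolding D_def by auto
    moreover have "t k < t (Suc k)" using t_sm by (simp add: strict_mono_Suc_iff)
    ultimately show ?thesis using B(2) P(2) by blast
  qed
  then show ?thesis using t_sm t_range D by blast
qed

definition cross_small :: "(nat \<Rightarrow> nat \<Rightarrow> real) \<Rightarrow> nat \<Rightarrow> nat \<Rightarrow> bool" where
  "cross_small a m n \<longleftrightarrow> (\<forall>i\<le>m. \<bar>a i n\<bar> < (1/2) ^ Suc m \<and> \<bar>a n i\<bar> < (1/2) ^ Suc m)"

lemma ultrafilter_nat_cross_small:
  assumes U: "ultrafilter_nat U"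
    and small: "\<And>i e. e > 0 \<Longrightarrow> {n. \<bar>a i n\<bar> < e \<and> \<bar>a n i\<bar> < e} \<in> U"
  shows "{n. cross_small a m n} \<in> U"
  unfolding cross_small_def by (rule ultrafilter_nat_all_atMost[OF U], rule small) simp

lemma cross_small_chain_bound:
  assumes t: "strict_mono t" and chain: "\<And>k. cross_small a (t k) (t (Suc k))"
    and "j < k"
  shows "\<bar>a (t j) (t k)\<bar> \<le> (1/2) ^ k \<and> \<bar>a (t k) (t j)\<bar> \<le> (1/2) ^ k"
proof -
  obtain k' where k: "k = Suc k'" using \<open>j < k\<close> less_imp_Suc_add by blast
  have "t j \<le> t k'" using t \<open>j < k\<close> k by (simp add: strict_mono_less_eq)
  then have "\<bar>a (t j) (t k)\<bar> < (1/2) ^ Suc (t k') \<and> \<bar>a (t k) (t j)\<bar> < (1/2) ^ Suc (t k')"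
    using chain[of k'] k unfolding cross_small_def by (simp del: power_Suc)
  moreover have "(1/2::real) ^ Suc (t k') \<le> (1/2) ^ k"
    using seq_suble[OF t, of k'] k by (intro power_decreasing) auto
  ultimately show ?thesis by linarith
qed

lemma cross_small_chain_bound_max:
  assumes t: "strict_mono t" and chain: "\<And>k. cross_small a (t k) (t (Suc k))"
    and neq: "j \<noteq> k"
  shows "\<bar>a (t j) (t k)\<bar> \<le> (1/2) ^ max j k"
proof -
  consider "j < k" | "k < j" using neq by (rule linorder_neqE_nat)
  then show ?thesis
  proof cases
    case 1
    then have "max j k = k" by simp
    with cross_small_chain_bound[OF t chain 1] show ?thesis by simp
  next
    case 2
    then have "max j k = j" by simp
    with cross_small_chain_bound[OF t chain 2] show ?thesis by simp
  qed
qed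

theorem lemma3p3:
  fixes U :: "nat set set"
    and y :: "nat \<Rightarrow> 'a::banach"
    and x :: "nat \<Rightarrow> ('a \<Rightarrow>\<^sub>L real)"
  assumes "ultrafilter_nat U" and "nonprincipal U" and "selective U"
    and "reflexive_space TYPE('a)"
    and "bounded (range y)" and "bounded (range x)"
    and "weak_ulim U y 0" and "weak_ulim U x 0"
  shows "\<exists>t :: nat \<Rightarrow> nat. strict_mono t \<and> range t \<in> U \<and>
           (\<forall>j k. j \<noteq> k \<longrightarrow> \<bar>blinfun_apply (x (t j)) (y (t k))\<bar> \<le> (1/2) ^ max j k)"
proof -
  define a where "a i n = x i (y n)" for i n
  have "{n. \<bar>a i n\<bar> < e \<and> \<bar>a n i\<bar> < e} \<in> U" if "e > 0" for i e
    using ultrafilter_nat_Int[OF assms(1) weak_ulim_zero_apply[OF assms(7) that]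
        weak_ulim_zero_dual_apply[OF assms(8) that]]
    by (simp add: a_def Collect_conj_eq)
  then have "{n. cross_small a m n} \<in> U" for m
    by (rule ultrafilter_nat_cross_small[OF assms(1)])
  then obtain t where t: "strict_mono t" "range t \<in> U" "\<And>k. cross_small a (t k) (t (Suc k))"
    using selective_chain_enumeration[OF assms(1-3), of "\<lambda>m. {n. cross_small a m n}"] by blast
  then show ?thesis
    using cross_small_chain_bound_max[OF t(1,3)] unfolding a_def by blast
qed

end
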